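(* Let $k$ be a positive integer. Then there exists $N$ (depending on $k$) such that for every integer $n>\max(k,N)$ with $\gcd(k,n)=1$ and every $m\in\{0,1,\ldots,n-1\}$ with $\gcd(m,n)=1$, the inequality $S(m,n)\ge S(k,n)$ holds only if $m$ can be written in the form $$m=\frac{nc+q}{d}$$ with integers $d\in\{1,\ldots,k\}$, $c\in\{0,1,\ldots,d-1\}$ with $\gcd(c,d)=1$, and $q\in\{1,\ldots,\lfloor k/d\rfloor\}$.
   Context: For integers $m,n$ with $n\neq 0$ and $\gcd(m,n)=1$, the Dedekind sum is $s(m,n)=\sum_{j=1}^{|n|}((j/n))((mj/n))$, where $((t))=t-\lfloor t\rfloor-1/2$ if $t\in\mathbb{R}\setminus\mathbb{Z}$ and $((t))=0$ if $t\in\mathbb{Z}$. Define $S(m,n)=12\,s(m,n)$. *)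

theory Defs
  imports Complex_Main
begin

definition sawtooth :: "real \<Rightarrow> real" where
  "sawtooth t = (if t \<in> \<int> then 0 else t - of_int \<lfloor>t\<rfloor> - 1/2)"

definition dedekind_sum :: "int \<Rightarrow> int \<Rightarrow> real" where
  "dedekind_sum m n = (\<Sum>j\<in>{1..\<bar>n\<bar>}. sawtooth (of_int j / of_int n) * sawtooth (of_int (m * j) / of_int n))"

definition S :: "int \<Rightarrow> int \<Rightarrow> real" where
  "S m n = 12 * dedekind_sum m n"

end

theory Submission
  imports Defs
begin

text \<open>
  The reciprocity law \<open>S(h,k) + S(k,h) = h/k + k/h + 1/(hk) - 3\<close>, proved by counting lattice points
  under the diagonal of a rectangle, together with \<open>|S(m,n)| \<le> 3n\<close> gives \<open>S(k,n) \<ge> n/k - 3 - 3k\<close>.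

  For the upper bound run the Euclidean algorithm two steps at a time: from \<open>n = a m + r\<close> and
  \<open>m = b r + r'\<close>, reciprocity and periodicity bound \<open>S(m,n) - m/n\<close> by \<open>a - 1\<close> plus the same
  quantity for \<open>(r', r)\<close>. If \<open>m\<close> is not of the stated form, then \<open>d m \<equiv> q (mod n)\<close> with
  \<open>d, q \<ge> 1\<close> forces \<open>d q > k\<close>: the fraction \<open>m/n\<close> is badly approximable from below with
  constant \<open>B = n/(k+1)\<close>. This property passes to \<open>r'/r\<close> and bounds every quotient \<open>a\<close> by \<open>B\<close>,
  and an induction gives \<open>S(m,n) \<le> 1 + n/(k+1) + 4 \<surd>n\<close>, which is smaller than
  \<open>n/k - 3 - 3k\<close> once \<open>n\<close> is large.
\<close>

section \<open>Sawtooth function and Dedekind sums\<close>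

lemma sawtooth_add_of_int: "sawtooth (x + of_int t) = sawtooth x"
proof -
  have "x + of_int t \<in> \<int> \<longleftrightarrow> x \<in> \<int>"
    by (metis Ints_add Ints_diff Ints_of_int add_diff_cancel_right')
  then show ?thesis by (simp add: sawtooth_def)
qed

lemma abs_sawtooth_le: "\<bar>sawtooth x\<bar> \<le> 1/2"
proof -
  have "x - 1 < of_int \<lfloor>x\<rfloor>" "of_int \<lfloor>x\<rfloor> \<le> x" by linarith+
  then have "\<bar>x - of_int \<lfloor>x\<rfloor> - 1/2\<bar> \<le> 1/2" unfolding abs_le_iff by linarith
  then show ?thesis by (simp add: sawtooth_def)
qed

lemma sawtooth_of_int_div:
  fixes a k :: int
  assumes "k > 0" "\<not> k dvd a"
  shows "sawtooth (of_int a / of_int k) = of_int (a mod k) / of_int k - 1/2"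
proof -
  have "of_int a / of_int k \<notin> (\<int>::real set)"
  proof
    assume "of_int a / of_int k \<in> (\<int>::real set)"
    then obtain z where "of_int a / of_int k = (of_int z::real)" by (auto elim: Ints_cases)
    then have "of_int a = (of_int (k * z)::real)" using assms(1) by (simp add: field_simps)
    then have "a = k * z" by linarith
    with assms(2) show False by simp
  qed
  moreover have "of_int a / of_int k - of_int (a div k) = (of_int (a mod k) / of_int k :: real)"
  proof -
    have "(of_int a::real) = of_int k * of_int (a div k) + of_int (a mod k)"
      by (metis div_mult_mod_eq mult.commute of_int_add of_int_mult)
    with assms(1) show ?thesis by (simp add: field_simps)
  qed
  ultimately show ?thesis by (simp add: sawtooth_def floor_divide_of_int_eq)
qed

lemma dedekind_sum_add_mult:
  assumes "n \<noteq> 0"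
  shows "dedekind_sum (m + n * t) n = dedekind_sum m n"
proof -
  have "sawtooth (of_int ((m + n * t) * j) / of_int n) = sawtooth (of_int (m * j) / of_int n)" for j
  proof -
    have "of_int ((m + n * t) * j) / of_int n = of_int (m * j) / of_int n + (of_int (t * j) :: real)"
      using assms by (simp add: field_simps)
    then show ?thesis by (simp only: sawtooth_add_of_int)
  qed
  then show ?thesis by (simp add: dedekind_sum_def)
qed

lemma S_mod: "n \<noteq> 0 \<Longrightarrow> S (m mod n) n = S m n"
  using dedekind_sum_add_mult[of n "m mod n" "m div n"] by (simp add: S_def)

lemma abs_S_le: "\<bar>S m n\<bar> \<le> 3 * \<bar>of_int n\<bar>"
proof -
  have "\<bar>dedekind_sum m n\<bar> \<le> (\<Sum>j\<in>{1..\<bar>n\<bar>}.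
      \<bar>sawtooth (of_int j / of_int n)\<bar> * \<bar>sawtooth (of_int (m * j) / of_int n)\<bar>)"
    unfolding dedekind_sum_def abs_mult[symmetric] by (rule sum_abs)
  also have "\<dots> \<le> (\<Sum>j\<in>{1..\<bar>n\<bar>}. 1/2 * (1/2))"
    by (intro sum_mono mult_mono abs_sawtooth_le) auto
  also have "\<dots> = \<bar>n\<bar> / 4" by simp
  finally show ?thesis by (simp add: S_def)
qed

lemma S_one_right [simp]: "S m 1 = 0"
  by (simp add: S_def dedekind_sum_def sawtooth_def)

section \<open>The reciprocity law\<close>

lemma sum_int_id: "k \<ge> 0 \<Longrightarrow> 2 * (\<Sum>j\<in>{1..k}. j) = k * (k + 1 :: int)"
proof (induction k rule: int_ge_induct)
  case (step i)
  then have "{1..i+1} = insert (i+1) {1..i}" by auto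
  with step show ?case by (simp add: algebra_simps)
qed simp

lemma sum_int_squares: "k \<ge> 0 \<Longrightarrow> 6 * (\<Sum>j\<in>{1..k}. j^2) = k * (k + 1) * (2 * k + 1 :: int)"
proof (induction k rule: int_ge_induct)
  case (step i)
  then have "{1..i+1} = insert (i+1) {1..i}" by auto
  with step show ?case by (simp add: algebra_simps power2_eq_square)
qed simp

lemma coprime_not_dvd_mult:
  fixes h k j :: int
  assumes "coprime h k" "j \<in> {1..k-1}"
  shows "\<not> k dvd h * j"
proof
  assume "k dvd h * j"
  with assms(1) have "k dvd j" by (simp add: coprime_commute coprime_dvd_mult_right_iff)
  with assms(2) show False by (auto dest: zdvd_imp_le)
qed

lemma bij_betw_mult_mod:
  fixes h k :: int
  assumes "k \<ge> 1" "coprime h k"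
  shows "bij_betw (\<lambda>j. h * j mod k) {1..k-1} {1..k-1}"
proof -
  have inj: "inj_on (\<lambda>j. h * j mod k) {1..k-1}"
  proof (rule inj_onI)
    fix x y assume xy: "x \<in> {1..k-1}" "y \<in> {1..k-1}" "h * x mod k = h * y mod k"
    then have "k dvd h * (x - y)" by (metis mod_eq_dvd_iff right_diff_distrib)
    with assms(2) have "k dvd x - y" by (simp add: coprime_commute coprime_dvd_mult_right_iff)
    moreover have "\<bar>x - y\<bar> < k" using xy(1,2) by auto
    ultimately show "x = y" using dvd_imp_le_int[of "x - y" k] by force
  qed
  have "(\<lambda>j. h * j mod k) ` {1..k-1} \<subseteq> {1..k-1}"
  proof
    fix y assume "y \<in> (\<lambda>j. h * j mod k) ` {1..k-1}"
    then obtain j where j: "j \<in> {1..k-1}" "y = h * j mod k" by auto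
    then have "y \<noteq> 0" using coprime_not_dvd_mult[OF assms(2) j(1)] by (simp add: dvd_eq_mod_eq_0)
    moreover have "0 \<le> y" "y < k" using j assms(1) by auto
    ultimately show "y \<in> {1..k-1}" by auto
  qed
  with inj have "(\<lambda>j. h * j mod k) ` {1..k-1} = {1..k-1}"
    by (intro endo_inj_surj) auto
  with inj show ?thesis by (simp add: bij_betw_def)
qed

lemma sum_mult_mod_reindex:
  fixes h k :: int
  assumes "k \<ge> 1" "coprime h k"
  shows "(\<Sum>j\<in>{1..k-1}. f (h * j mod k)) = (\<Sum>j\<in>{1..k-1}. f j)"
  using sum.reindex_bij_betw[OF bij_betw_mult_mod[OF assms], of f] by simp

lemma sum_mult_mult_mod:
  fixes h k :: int
  shows "(\<Sum>j\<in>{1..k-1}. j * (h * j mod k))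
       = h * (\<Sum>j\<in>{1..k-1}. j^2) - k * (\<Sum>j\<in>{1..k-1}. j * (h * j div k))"
proof -
  have "(\<Sum>j\<in>{1..k-1}. j * (h * j mod k)) = (\<Sum>j\<in>{1..k-1}. h * j^2 - k * (j * (h * j div k)))"
    by (rule sum.cong) (auto simp: minus_div_mult_eq_mod[symmetric] algebra_simps power2_eq_square)
  then show ?thesis by (simp add: sum_subtractf sum_distrib_left)
qed

lemma sum_mult_div_identity:
  fixes h k :: int
  assumes "k \<ge> 1" "coprime h k"
  shows "h * (\<Sum>j\<in>{1..k-1}. j) - k * (\<Sum>j\<in>{1..k-1}. h * j div k) = (\<Sum>j\<in>{1..k-1}. j)"
proof -
  have "(\<Sum>j\<in>{1..k-1}. j) = (\<Sum>j\<in>{1..k-1}. h * j mod k)"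
    using sum_mult_mod_reindex[OF assms, of "\<lambda>x. x"] by simp
  also have "\<dots> = (\<Sum>j\<in>{1..k-1}. h * j - k * (h * j div k))"
    by (rule sum.cong) (auto simp: minus_div_mult_eq_mod[symmetric] mult.commute)
  also have "\<dots> = h * (\<Sum>j\<in>{1..k-1}. j) - k * (\<Sum>j\<in>{1..k-1}. h * j div k)"
    by (simp add: sum_subtractf sum_distrib_left)
  finally show ?thesis by simp
qed

lemma sum_mult_div_square_identity:
  fixes h k :: int
  assumes "k \<ge> 1" "coprime h k"
  shows "h^2 * (\<Sum>j\<in>{1..k-1}. j^2) - 2 * h * k * (\<Sum>j\<in>{1..k-1}. j * (h * j div k))
        + k^2 * (\<Sum>j\<in>{1..k-1}. (h * j div k)^2) = (\<Sum>j\<in>{1..k-1}. j^2)"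
proof -
  have "(\<Sum>j\<in>{1..k-1}. j^2) = (\<Sum>j\<in>{1..k-1}. (h * j mod k)^2)"
    using sum_mult_mod_reindex[OF assms, of "\<lambda>x. x^2"] by simp
  also have "\<dots> = (\<Sum>j\<in>{1..k-1}. h^2 * j^2 - 2 * h * k * (j * (h * j div k)) + k^2 * (h * j div k)^2)"
    by (rule sum.cong)
      (auto simp: minus_div_mult_eq_mod[symmetric] power2_eq_square algebra_simps)
  also have "\<dots> = h^2 * (\<Sum>j\<in>{1..k-1}. j^2) - 2 * h * k * (\<Sum>j\<in>{1..k-1}. j * (h * j div k))
        + k^2 * (\<Sum>j\<in>{1..k-1}. (h * j div k)^2)"
    by (simp add: sum.distrib sum_subtractf sum_distrib_left)
  finally show ?thesis by simp
qed

lemma int_le_div_iff_mult_le: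
  fixes a c x :: int
  assumes "c > 0"
  shows "x \<le> a div c \<longleftrightarrow> x * c \<le> a"
proof
  assume "x \<le> a div c"
  then have "x * c \<le> a div c * c" using assms by (rule mult_right_mono[OF _ less_imp_le])
  also have "\<dots> \<le> a" using pos_mod_sign[OF assms, of a] minus_mod_eq_div_mult[of a c] by linarith
  finally show "x * c \<le> a" .
next
  assume "x * c \<le> a"
  then have "x * c div c \<le> a div c" using assms by (intro zdiv_mono1) auto
  then show "x \<le> a div c" using assms by simp
qed

lemma sum_if_mult_le:
  fixes a c M :: int
  assumes "c > 0" "a div c \<le> M"
  shows "(\<Sum>x\<in>{1..M}. if c * x \<le> a then f x else 0) = (\<Sum>x\<in>{1..a div c}. f x)"
proof -
  have "c * x \<le> a \<longleftrightarrow> x \<le> a div c" for x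
    using int_le_div_iff_mult_le[OF assms(1)] by (simp add: mult.commute)
  then have "{x\<in>{1..M}. c * x \<le> a} = {x\<in>{1..M}. x \<le> a div c}" by simp
  also have "\<dots> = {1..a div c}" using assms(2) by auto
  finally show ?thesis by (simp add: sum.inter_filter[symmetric])
qed

text \<open>Counting the lattice points \<open>(i, j)\<close> of the rectangle \<open>[1, h-1] \<times> [1, k-1]\<close>, weighted by
  \<open>i\<close>, on either side of the diagonal \<open>k i = h j\<close>, which contains none of them.\<close>

lemma sum_mult_div_lattice_identity:
  fixes h k :: int
  assumes "h \<ge> 1" "k \<ge> 1" "coprime h k"
  shows "(\<Sum>j\<in>{1..k-1}. (h * j div k)^2) + (\<Sum>j\<in>{1..k-1}. h * j div k)
         + 2 * (\<Sum>i\<in>{1..h-1}. i * (k * i div h)) = (k - 1) * h * (h - 1)"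
proof -
  have below: "2 * (\<Sum>i\<in>{1..h-1}. if k * i \<le> h * j then i else 0) = (h * j div k)^2 + h * j div k"
    if j: "j \<in> {1..k-1}" for j
  proof -
    have q: "0 \<le> h * j div k" "h * j div k \<le> h - 1"
      using int_le_div_iff_mult_le[of k h "h * j"] j assms
      by (simp_all add: mult.commute pos_imp_zdiv_nonneg_iff)
    with assms(2) have "(\<Sum>i\<in>{1..h-1}. if k * i \<le> h * j then i else 0) = (\<Sum>i\<in>{1..h * j div k}. i)"
      by (simp add: sum_if_mult_le)
    with q(1) sum_int_id[of "h * j div k"] show ?thesis by (simp add: power2_eq_square algebra_simps)
  qed
  have above: "(\<Sum>j\<in>{1..k-1}. if h * j \<le> k * i then i else 0) = i * (k * i div h)"
    if i: "i \<in> {1..h-1}" for i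
  proof -
    have "0 \<le> k * i div h" "k * i div h \<le> k - 1"
      using int_le_div_iff_mult_le[of h k "k * i"] i assms
      by (simp_all add: mult.commute pos_imp_zdiv_nonneg_iff)
    with assms(1) show ?thesis by (simp add: sum_if_mult_le)
  qed
  have split: "(\<Sum>i\<in>{1..h-1}. i) = (\<Sum>i\<in>{1..h-1}. if k * i \<le> h * j then i else 0)
      + (\<Sum>i\<in>{1..h-1}. if h * j \<le> k * i then i else 0)" if j: "j \<in> {1..k-1}" for j
  proof -
    have "k * i \<noteq> h * j" for i
      using coprime_not_dvd_mult[OF assms(3) j] by (metis dvd_triv_left)
    then show ?thesis unfolding sum.distrib[symmetric] by (intro sum.cong) auto
  qed
  have "(k - 1) * h * (h - 1) = (\<Sum>j\<in>{1..k-1}. 2 * (\<Sum>i\<in>{1..h-1}. i))"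
    using sum_int_id[of "h - 1"] assms by simp
  also have "\<dots> = (\<Sum>j\<in>{1..k-1}. 2 * (\<Sum>i\<in>{1..h-1}. if k * i \<le> h * j then i else 0)
      + 2 * (\<Sum>i\<in>{1..h-1}. if h * j \<le> k * i then i else 0))"
    by (rule sum.cong[OF refl]) (simp add: split distrib_left)
  also have "\<dots> = (\<Sum>j\<in>{1..k-1}. 2 * (\<Sum>i\<in>{1..h-1}. if k * i \<le> h * j then i else 0))
      + 2 * (\<Sum>i\<in>{1..h-1}. \<Sum>j\<in>{1..k-1}. if h * j \<le> k * i then i else 0)"
    unfolding sum.distrib sum_distrib_left[symmetric] by (subst sum.swap) (rule refl)
  also have "\<dots> = (\<Sum>j\<in>{1..k-1}. (h * j div k)^2 + h * j div k)
      + 2 * (\<Sum>i\<in>{1..h-1}. i * (k * i div h))"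
    using below above by simp
  finally show ?thesis by (simp add: sum.distrib)
qed

definition dedekind_numerator :: "int \<Rightarrow> int \<Rightarrow> int" where
  "dedekind_numerator h k =
     4 * (\<Sum>j\<in>{1..k-1}. j * (h * j mod k)) - 4 * k * (\<Sum>j\<in>{1..k-1}. j) + (k - 1) * k^2"

lemma dedekind_sum_eq_numerator:
  fixes h k :: int
  assumes "k \<ge> 1" "coprime h k"
  shows "dedekind_sum h k = of_int (dedekind_numerator h k) / (4 * of_int k ^ 2)"
proof -
  have "{1..k} = insert k {1..k-1}" using assms by auto
  then have "dedekind_sum h k =
      (\<Sum>j\<in>{1..k-1}. sawtooth (of_int j / of_int k) * sawtooth (of_int (h * j) / of_int k))"
    using assms by (simp add: dedekind_sum_def sawtooth_def)
  also have "\<dots> = (\<Sum>j\<in>{1..k-1}. of_int ((2 * j - k) * (2 * (h * j mod k) - k)) / (4 * of_int k ^ 2))"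
  proof (rule sum.cong[OF refl])
    fix j assume j: "j \<in> {1..k-1}"
    have "\<not> k dvd j" using j by (auto dest: zdvd_imp_le)
    with j assms(1) have s1: "sawtooth (of_int j / of_int k) = of_int (2 * j - k) / (2 * of_int k)"
      using sawtooth_of_int_div[of k j] by (simp add: field_simps)
    have s2: "sawtooth (of_int (h * j) / of_int k) = of_int (2 * (h * j mod k) - k) / (2 * of_int k)"
      using sawtooth_of_int_div[of k "h * j"] coprime_not_dvd_mult[OF assms(2) j] assms(1)
      by (simp add: field_simps)
    show "sawtooth (of_int j / of_int k) * sawtooth (of_int (h * j) / of_int k) =
        of_int ((2 * j - k) * (2 * (h * j mod k) - k)) / (4 * of_int k ^ 2)"
      unfolding s1 s2 by (simp add: power2_eq_square)
  qed
  also have "\<dots> = of_int (\<Sum>j\<in>{1..k-1}. (2 * j - k) * (2 * (h * j mod k) - k)) / (4 * of_int k ^ 2)"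
    by (simp add: sum_divide_distrib)
  also have "(\<Sum>j\<in>{1..k-1}. (2 * j - k) * (2 * (h * j mod k) - k)) =
      4 * (\<Sum>j\<in>{1..k-1}. j * (h * j mod k)) - 2 * k * (\<Sum>j\<in>{1..k-1}. j)
      - 2 * k * (\<Sum>j\<in>{1..k-1}. h * j mod k) + (k - 1) * k^2"
    using assms(1)
    by (simp add: algebra_simps power2_eq_square sum.distrib sum_subtractf sum_distrib_left)
  also have "(\<Sum>j\<in>{1..k-1}. h * j mod k) = (\<Sum>j\<in>{1..k-1}. j)"
    using sum_mult_mod_reindex[OF assms, of "\<lambda>x. x"] by simp
  finally show ?thesis by (simp add: dedekind_numerator_def algebra_simps)
qed

text \<open>The certificate: every bracket on the right-hand side vanishes by one of the hypotheses.\<close>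

lemma reciprocity_polynomial_identity:
  fixes h k N M P1 P2 Q1 Q2 X Y Z X' :: int
  assumes "N = 4 * (h * P2 - k * X) - 4 * k * P1 + (k - 1) * k^2"
    and "M = 4 * (k * Q2 - h * X') - 4 * h * Q1 + (h - 1) * h^2"
    and e_square: "h^2 * P2 - 2 * h * k * X + k^2 * Y - P2 = 0"
    and e_linear: "h * P1 - k * Z - P1 = 0"
    and e_lattice: "Y + Z + 2 * X' - (k - 1) * h * (h - 1) = 0"
    and e_sums: "2 * P1 - k * (k - 1) = 0" "6 * P2 - (k - 1) * k * (2 * k - 1) = 0"
      "2 * Q1 - h * (h - 1) = 0" "6 * Q2 - (h - 1) * h * (2 * h - 1) = 0"
  shows "3 * h^2 * N + 3 * k^2 * M = h * k * (h^2 + k^2 + 1) - 3 * h^2 * k^2"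
proof -
  have "3 * h^2 * N + 3 * k^2 * M - (h * k * (h^2 + k^2 + 1) - 3 * h^2 * k^2)
    = 6 * h * (h^2 * P2 - 2 * h * k * X + k^2 * Y - P2)
      - 6 * h * k * (h * P1 - k * Z - P1)
      - 6 * h * k^2 * (Y + Z + 2 * X' - (k - 1) * h * (h - 1))
      - 3 * h * k * (h + 1) * (2 * P1 - k * (k - 1))
      + h * (h^2 + 1) * (6 * P2 - (k - 1) * k * (2 * k - 1))
      - 6 * h * k^2 * (2 * Q1 - h * (h - 1))
      + 2 * k^3 * (6 * Q2 - (h - 1) * h * (2 * h - 1))"
    unfolding assms(1,2) by algebra
  also have "\<dots> = 0" unfolding e_square e_linear e_lattice e_sums by simp
  finally show ?thesis by simp
qed

lemma dedekind_numerator_reciprocity: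
  fixes h k :: int
  assumes "h \<ge> 1" "k \<ge> 1" "coprime h k"
  shows "3 * h^2 * dedekind_numerator h k + 3 * k^2 * dedekind_numerator k h
       = h * k * (h^2 + k^2 + 1) - 3 * h^2 * k^2"
proof (rule reciprocity_polynomial_identity)
  show "dedekind_numerator h k = 4 * (h * (\<Sum>j\<in>{1..k-1}. j^2) - k * (\<Sum>j\<in>{1..k-1}. j * (h * j div k)))
      - 4 * k * (\<Sum>j\<in>{1..k-1}. j) + (k - 1) * k^2"
    "dedekind_numerator k h = 4 * (k * (\<Sum>i\<in>{1..h-1}. i^2) - h * (\<Sum>i\<in>{1..h-1}. i * (k * i div h)))
      - 4 * h * (\<Sum>i\<in>{1..h-1}. i) + (h - 1) * h^2"
    by (simp_all only: dedekind_numerator_def sum_mult_mult_mod)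
  show "h^2 * (\<Sum>j\<in>{1..k-1}. j^2) - 2 * h * k * (\<Sum>j\<in>{1..k-1}. j * (h * j div k))
      + k^2 * (\<Sum>j\<in>{1..k-1}. (h * j div k)^2) - (\<Sum>j\<in>{1..k-1}. j^2) = 0"
    using sum_mult_div_square_identity[OF assms(2,3)] by simp
  show "h * (\<Sum>j\<in>{1..k-1}. j) - k * (\<Sum>j\<in>{1..k-1}. h * j div k) - (\<Sum>j\<in>{1..k-1}. j) = 0"
    using sum_mult_div_identity[OF assms(2,3)] by simp
  show "(\<Sum>j\<in>{1..k-1}. (h * j div k)^2) + (\<Sum>j\<in>{1..k-1}. h * j div k)
      + 2 * (\<Sum>i\<in>{1..h-1}. i * (k * i div h)) - (k - 1) * h * (h - 1) = 0"
    using sum_mult_div_lattice_identity[OF assms] by simp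
  show "2 * (\<Sum>j\<in>{1..k-1}. j) - k * (k - 1) = 0"
    "6 * (\<Sum>j\<in>{1..k-1}. j^2) - (k - 1) * k * (2 * k - 1) = 0"
    "2 * (\<Sum>i\<in>{1..h-1}. i) - h * (h - 1) = 0"
    "6 * (\<Sum>i\<in>{1..h-1}. i^2) - (h - 1) * h * (2 * h - 1) = 0"
    using sum_int_id[of "k - 1"] sum_int_squares[of "k - 1"]
      sum_int_id[of "h - 1"] sum_int_squares[of "h - 1"] assms
    by (simp_all add: algebra_simps)
qed

theorem S_reciprocity:
  fixes h k :: int
  assumes "h \<ge> 1" "k \<ge> 1" "coprime h k"
  shows "S h k + S k h = of_int h / of_int k + of_int k / of_int h + 1 / (of_int h * of_int k) - 3"
proof -
  have hk: "(of_int h::real) > 0" "(of_int k::real) > 0" using assms by auto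
  have "S h k + S k h = (3 * of_int h ^ 2 * of_int (dedekind_numerator h k)
      + 3 * of_int k ^ 2 * of_int (dedekind_numerator k h)) / (of_int h ^ 2 * of_int k ^ 2)"
    using hk assms
    by (simp add: S_def dedekind_sum_eq_numerator coprime_commute field_simps power2_eq_square)
  also have "\<dots> = (of_int h * of_int k * (of_int h ^ 2 + of_int k ^ 2 + 1) - 3 * of_int h ^ 2 * of_int k ^ 2)
      / (of_int h ^ 2 * of_int k ^ 2)"
    using arg_cong[OF dedekind_numerator_reciprocity[OF assms], of "of_int :: int \<Rightarrow> real"] by simp
  also have "\<dots> = of_int h / of_int k + of_int k / of_int h + 1 / (of_int h * of_int k) - 3"
    using hk by (simp add: field_simps power2_eq_square)
  finally show ?thesis .
qed

lemma S_one_left: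
  assumes "n \<ge> 1"
  shows "S 1 n = of_int n + 2 / of_int n - 3"
  using S_reciprocity[of 1 n] assms by simp

section \<open>An upper bound through the Euclidean algorithm\<close>

text \<open>Writing \<open>d m = c n + q\<close>, the condition says \<open>m/n - c/d \<ge> 1/(B d\<^sup>2)\<close> for every fraction \<open>c/d\<close>
  with \<open>0 < m/n - c/d \<le> 1/d\<close>.\<close>

definition badly_approximable_below :: "real \<Rightarrow> int \<Rightarrow> int \<Rightarrow> bool" where
  "badly_approximable_below B m n \<longleftrightarrow>
     (\<forall>d q. 1 \<le> d \<longrightarrow> 1 \<le> q \<longrightarrow> q \<le> n \<longrightarrow> (d * m) mod n = q mod n \<longrightarrow>
        of_int n \<le> B * of_int d * of_int q)"

lemma badly_approximable_below_quotient_le: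
  assumes "badly_approximable_below B m n" "1 \<le> m" "m \<le> n"
  shows "of_int (n div m) \<le> B"
proof -
  have "of_int n \<le> B * of_int m"
    using assms(1)[unfolded badly_approximable_below_def, rule_format, of 1 m] assms(2,3) by simp
  moreover have "of_int (n div m) * of_int m \<le> (of_int n :: real)"
    using int_le_div_iff_mult_le[of m "n div m" n] assms(2) by (simp flip: of_int_mult)
  ultimately have "of_int (n div m) * of_int m \<le> B * of_int m" by linarith
  with assms(2) show ?thesis by simp
qed

text \<open>A congruence \<open>d' m \<equiv> q' (mod r)\<close>, say \<open>d' m - q' = t r\<close>, lifts to \<open>d m \<equiv> q' (mod n)\<close>
  with \<open>d = d' + t (n div m)\<close>; as \<open>d r \<le> d' n\<close>, the bound for \<open>(m, n)\<close> carries over.\<close>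

lemma badly_approximable_below_mod:
  fixes m n :: int
  assumes "badly_approximable_below B m n" "1 \<le> m" "m < n" "0 \<le> B"
  defines "r \<equiv> n mod m"
  assumes "1 \<le> r"
  shows "badly_approximable_below B (m mod r) r"
  unfolding badly_approximable_below_def
proof (intro allI impI)
  fix d' q' :: int
  assume d': "1 \<le> d'" and q': "1 \<le> q'" "q' \<le> r" and cong: "(d' * (m mod r)) mod r = q' mod r"
  define a where "a = n div m"
  have n_eq: "n = a * m + r" unfolding a_def r_def by simp
  have "r < m" unfolding r_def using assms(2) by simp
  have "1 \<le> a" unfolding a_def using int_le_div_iff_mult_le[of m 1 n] assms(2,3) by simp
  have "(d' * m) mod r = q' mod r" using cong by (simp add: mod_mult_right_eq)
  then obtain t where t: "d' * m - q' = r * t" by (metis mod_eq_dvd_iff dvdE)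
  have "m \<le> d' * m" using d' assms(2) by simp
  with t \<open>r < m\<close> q' have "0 < r * t" by linarith
  with assms(6) have "1 \<le> t" by (simp add: zero_less_mult_iff)
  define d where "d = d' + t * a"
  have "d * m = q' + n * t" unfolding d_def using t n_eq by (simp add: algebra_simps)
  then have "(d * m) mod n = q' mod n" by simp
  moreover have "1 \<le> d" unfolding d_def using d' \<open>1 \<le> t\<close> \<open>1 \<le> a\<close> by (simp add: add_increasing2)
  moreover have "q' \<le> n" using q' \<open>r < m\<close> assms(3) by linarith
  ultimately have bound: "of_int n \<le> B * of_int d * of_int q'"
    using assms(1) q' unfolding badly_approximable_below_def by blast
  have "d * r = d' * n - a * q'" unfolding d_def using t n_eq by (simp add: algebra_simps)
  then have "d * r \<le> d' * n" using \<open>1 \<le> a\<close> q' by simp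
  have "of_int n * of_int r \<le> B * of_int q' * of_int (d * r)"
    using mult_right_mono[OF bound, of "of_int r"] assms(6) by (simp add: algebra_simps)
  also have "\<dots> \<le> B * of_int q' * of_int (d' * n)"
    using \<open>d * r \<le> d' * n\<close> assms(4) q' by (intro mult_left_mono) (simp_all flip: of_int_mult)
  finally have "of_int n * of_int r \<le> of_int n * (B * of_int d' * of_int q')"
    by (simp add: algebra_simps)
  with assms(3) \<open>r < m\<close> \<open>1 \<le> r\<close> show "of_int r \<le> B * of_int d' * of_int q'"
    by (simp add: mult_le_cancel_left_pos)
qed

lemma coprime_mod_ge_one:
  fixes m n :: int
  assumes "2 \<le> m" "coprime m n"
  shows "1 \<le> n mod m"
proof -
  have "n mod m \<noteq> 0"
  proof
    assume "n mod m = 0"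
    then have "m dvd 1" using assms(2) by (metis coprime_common_divisor dvd_refl mod_0_imp_dvd)
    with assms(1) show False by (auto dest: zdvd_imp_le)
  qed
  with assms(1) show ?thesis using pos_mod_sign[of m n] by linarith
qed

lemma S_minus_ratio_two_step:
  fixes m n :: int
  assumes "2 \<le> m" "m < n" "coprime m n"
  defines "r \<equiv> n mod m"
  shows "S m n - of_int m / of_int n
    \<le> of_int (n div m) - 1 + (S (m mod r) r - of_int (m mod r) / of_int r)"
proof -
  define r' where "r' = m mod r"
  have r: "1 \<le> r" "r < m" unfolding r_def using coprime_mod_ge_one[OF assms(1,3)] assms(1) by auto
  have "coprime r m" unfolding r_def using assms(1,3) by (simp add: coprime_commute)
  have "S m n + S r m = of_int m / of_int n + of_int n / of_int m + 1 / (of_int m * of_int n) - 3"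
    using S_reciprocity[of m n] S_mod[of m n] assms(1,2,3) unfolding r_def by simp
  moreover have "S r m + S r' r = of_int r / of_int m + of_int m / of_int r + 1 / (of_int r * of_int m) - 3"
    using S_reciprocity[of r m] S_mod[of r m] r \<open>coprime r m\<close> unfolding r'_def by simp
  moreover have "of_int n / of_int m - of_int r / of_int m = (of_int (n div m) :: real)"
  proof -
    have "n = n div m * m + r" unfolding r_def by simp
    then have "of_int n = of_int (n div m) * of_int m + (of_int r :: real)" by (metis of_int_add of_int_mult)
    with assms(1) show ?thesis by (simp add: field_simps)
  qed
  moreover have "1 + of_int r' / of_int r \<le> (of_int m / of_int r :: real)"
  proof -
    have "1 \<le> m div r" using int_le_div_iff_mult_le[of r 1 m] r by simp
    then have "r + r' \<le> m" unfolding r'_def using r minus_mod_eq_div_mult[of m r]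
      by (smt (verit) mult_le_cancel_right1)
    then have "(of_int r + of_int r') / of_int r \<le> (of_int m / of_int r :: real)"
      using r by (intro divide_right_mono) simp_all
    with r show ?thesis by (simp add: add_divide_distrib)
  qed
  moreover have "1 / (of_int m * of_int n) \<le> (1 / (of_int r * of_int m) :: real)"
    using r assms(2) by (intro divide_left_mono mult_mono) simp_all
  ultimately show ?thesis unfolding r'_def by linarith
qed

text \<open>With \<open>u = \<surd>(x + 1)\<close> we have \<open>\<surd>r \<le> \<surd>n / u\<close>, and \<open>u\<^sup>2 \<le> \<surd>n\<close> gives \<open>u\<^sup>3 - 2 u \<le> 4 \<surd>n (u - 1)\<close>.\<close>

lemma budget_step_small_quotient:
  fixes x r n :: real
  assumes "x \<ge> 1" "r \<ge> 1" "(x + 1) * r \<le> n" "(x + 1)^2 \<le> n"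
  shows "x - 1 + 4 * sqrt r \<le> 4 * sqrt n"
proof -
  define u where "u = sqrt (x + 1)"
  have u: "u \<ge> 1" "u^2 = x + 1" unfolding u_def using assms(1) by simp_all
  have "sqrt r * u \<le> sqrt n"
    unfolding u_def using real_sqrt_le_mono[OF assms(3)] by (simp add: real_sqrt_mult mult.commute)
  have "u^2 \<le> sqrt n"
    using real_sqrt_le_mono[OF assms(4)] assms(1) u(2) by simp
  have "u^3 - 2 * u \<le> 4 * u^2 * (u - 1)"
  proof -
    have "0 \<le> u * (3 * (u - 2/3)^2 + 2/3)" using u(1) by simp
    then show ?thesis by (simp add: power3_eq_cube power2_eq_square algebra_simps)
  qed
  also have "\<dots> \<le> 4 * sqrt n * (u - 1)"
    using \<open>u^2 \<le> sqrt n\<close> u(1) by (intro mult_right_mono) auto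
  finally have "u * (4 * sqrt r) \<le> u * (4 * sqrt n - u^2 + 2)"
    using \<open>sqrt r * u \<le> sqrt n\<close> by (simp add: algebra_simps power3_eq_cube power2_eq_square)
  then have "4 * sqrt r \<le> 4 * sqrt n - u^2 + 2" using u(1) by simp
  then show ?thesis using u(2) by simp
qed

lemma budget_step_large_quotient:
  fixes x r n :: real
  assumes "x \<ge> 1" "r \<ge> 1" "(x + 1) * r \<le> n" "n < (x + 1)^2"
  shows "r - 1 + 4 * sqrt r \<le> 4 * sqrt n"
proof -
  have "(x + 1) * r < (x + 1) * (x + 1)" using assms(3,4) by (simp add: power2_eq_square)
  then have "r < x + 1" using assms(1) by simp
  then have "r * r < (x + 1) * r" using assms(2) by simp
  then have "r^2 < n" using assms(3) by (simp add: power2_eq_square)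
  then have "sqrt (r^2) < sqrt n" by (rule real_sqrt_less_mono)
  then have "r < sqrt n" using assms(2) by simp
  moreover have "r - 1 + 4 * sqrt r \<le> 4 * r"
  proof -
    have "1 \<le> sqrt r" using assms(2) by simp
    then have "0 \<le> (3 * sqrt r - 1) * (sqrt r - 1)"
      using mult_nonneg_nonneg[of "3 * sqrt r - 1" "sqrt r - 1"] by linarith
    also have "\<dots> = 3 * r - 4 * sqrt r + 1" using assms(2) by (simp add: algebra_simps)
    finally show ?thesis by simp
  qed
  ultimately show ?thesis by linarith
qed

text \<open>The quantity \<open>min B n + 4 \<surd>n\<close> absorbs the loss \<open>x - 1\<close> of one double Euclidean step with
  quotient \<open>x\<close> that descends from \<open>n\<close> to \<open>r\<close>.\<close>

lemma budget_step:
  fixes x r n B :: real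
  assumes "x \<ge> 1" "r \<ge> 1" "(x + 1) * r \<le> n" "x \<le> B"
  shows "x - 1 + (min B r + 4 * sqrt r) \<le> min B n + 4 * sqrt n"
proof (cases "(x + 1)^2 \<le> n")
  case True
  have "r \<le> n" using assms(1-3) by (smt (verit) mult_le_cancel_right1)
  then have "min B r \<le> min B n" by simp
  with budget_step_small_quotient[OF assms(1-3) True] show ?thesis by linarith
next
  case False
  have "x \<le> n" using assms(1-3) by (smt (verit) mult_le_cancel_left1)
  with assms(4) have "x \<le> min B n" by simp
  with budget_step_large_quotient[OF assms(1-3)] False show ?thesis by (smt (verit) min.cobounded2)
qed

theorem S_minus_ratio_le:
  assumes "badly_approximable_below B m n" "1 \<le> B" "0 \<le> m" "m < n" "coprime m n"
  shows "S m n - of_int m / of_int n \<le> min B (of_int n) + 4 * sqrt (of_int n)"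
  using assms
proof (induction "nat n" arbitrary: m n rule: less_induct)
  case less
  then have m: "0 \<le> m" "m < n" and B: "1 \<le> B" "badly_approximable_below B m n" by auto
  consider "m = 0" | "m = 1" | "2 \<le> m" using m by linarith
  then show ?case
  proof cases
    case 1
    with less.prems have "n = 1" by simp
    with 1 B show ?thesis by simp
  next
    case 2
    have "S m n - of_int m / of_int n = of_int n + 1 / of_int n - 3"
      using S_one_left[of n] 2 m by simp
    moreover have "min B (of_int n) = of_int n"
      using badly_approximable_below_quotient_le[OF B(2)] 2 m by simp
    moreover have "1 / of_int n \<le> (1::real)" "0 \<le> sqrt (of_int n)" using 2 m by simp_all
    ultimately show ?thesis by linarith
  next
    case 3
    define r where "r = n mod m"
    have r: "1 \<le> r" "r < m" unfolding r_def using coprime_mod_ge_one[OF 3 less.prems(5)] 3 by auto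
    have IH: "S (m mod r) r - of_int (m mod r) / of_int r \<le> min B (of_int r) + 4 * sqrt (of_int r)"
    proof (rule less.hyps)
      show "nat r < nat n" "badly_approximable_below B (m mod r) r" "0 \<le> m mod r" "m mod r < r"
        using r m badly_approximable_below_mod[OF B(2) _ m(2)] B(1) unfolding r_def by auto
      show "coprime (m mod r) r" using less.prems(5) r unfolding r_def by (simp add: coprime_commute)
    qed (use B in simp)
    have a: "1 \<le> n div m" "(n div m + 1) * r \<le> n"
    proof -
      show "1 \<le> n div m" using int_le_div_iff_mult_le[of m 1 n] m 3 by simp
      then have "n div m * r \<le> n div m * m" using r by simp
      then show "(n div m + 1) * r \<le> n"
        unfolding distrib_right mult_1 using minus_mod_eq_div_mult[of n m] r_def by linarith
    qed
    have "S m n - of_int m / of_int n \<le> of_int (n div m) - 1 + (min B (of_int r) + 4 * sqrt (of_int r))"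
      using S_minus_ratio_two_step[OF 3 m(2) less.prems(5)] IH unfolding r_def by linarith
    also have "\<dots> \<le> min B (of_int n) + 4 * sqrt (of_int n)"
    proof (rule budget_step)
      show "(of_int (n div m) + 1) * of_int r \<le> (of_int n :: real)"
        using a(2) by (metis of_int_le_iff of_int_add of_int_mult of_int_1)
    qed (use a r badly_approximable_below_quotient_le[OF B(2)] 3 m in simp_all)
    finally show ?thesis .
  qed
qed

section \<open>The lower bound and the main theorem\<close>

lemma S_lower_bound:
  fixes k n :: int
  assumes "k \<ge> 1" "n \<ge> 1" "coprime k n"
  shows "of_int n / of_int k - 3 - 3 * of_int k \<le> S k n"
proof -
  have "S n k \<le> 3 * of_int k" using abs_S_le[of n k] assms(1) by (simp add: abs_le_iff)
  moreover have "0 \<le> of_int k / (of_int n :: real)" "0 \<le> 1 / (of_int k * of_int n :: real)"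
    using assms(1,2) by simp_all
  ultimately show ?thesis using S_reciprocity[OF assms] by linarith
qed

definition small_fraction_form :: "int \<Rightarrow> int \<Rightarrow> int \<Rightarrow> bool" where
  "small_fraction_form k n m \<longleftrightarrow>
     (\<exists>d c q::int. d \<in> {1..k} \<and> c \<in> {0..d-1} \<and> gcd c d = 1 \<and>
        q \<in> {1..k div d} \<and> of_int m = (of_int (n * c + q) / of_int d :: real))"

text \<open>Dividing \<open>c\<close>, \<open>d\<close> and \<open>q\<close> by \<open>gcd c d\<close> gives the coprime representation.\<close>

lemma small_fraction_form_if_eq:
  fixes k n m d c q :: int
  assumes "1 \<le> d" "1 \<le> q" "d * q \<le> k" "0 \<le> c" "c < d" "d * m = n * c + q"
  shows "small_fraction_form k n m"
proof -
  define g where "g = gcd c d"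
  have "0 < g" using assms(1) unfolding g_def by simp
  obtain c' d' where cd: "c = c' * g" "d = d' * g" and "coprime c' d'"
    using gcd_coprime_exists[of c d] \<open>0 < g\<close> unfolding g_def by auto
  define q' where "q' = d' * m - n * c'"
  have q: "q = q' * g" unfolding q'_def using assms(6) cd by (simp add: algebra_simps)
  have "0 < d' * g" "0 < q' * g" "0 \<le> c' * g" using assms(1,2,4) cd q by simp_all
  with \<open>0 < g\<close> have "1 \<le> d'" "1 \<le> q'" "0 \<le> c'"
    by (simp_all add: zero_less_mult_iff zero_le_mult_iff)
  have "c' < d'" using assms(5) cd \<open>0 < g\<close> by simp
  have "d' * q' * 1 \<le> d' * q' * (g * g)"
    using \<open>1 \<le> d'\<close> \<open>1 \<le> q'\<close> \<open>0 < g\<close> mult_mono[of 1 g 1 g] by (intro mult_left_mono) simp_all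
  then have "d' * q' \<le> k" using assms(3) cd q by (simp add: algebra_simps)
  moreover have "d' \<le> d' * q'" using \<open>1 \<le> q'\<close> \<open>1 \<le> d'\<close> by simp
  ultimately have "d' \<le> k" by linarith
  moreover have "q' \<le> k div d'"
    using \<open>d' * q' \<le> k\<close> \<open>1 \<le> d'\<close> int_le_div_iff_mult_le[of d' q' k] by (simp add: mult.commute)
  moreover have "of_int m = (of_int (n * c' + q') / of_int d' :: real)"
  proof -
    have "(of_int (d' * m) :: real) = of_int (n * c' + q')" unfolding q'_def by simp
    with \<open>1 \<le> d'\<close> show ?thesis by (simp add: field_simps)
  qed
  ultimately show ?thesis
    unfolding small_fraction_form_def using \<open>1 \<le> d'\<close> \<open>1 \<le> q'\<close> \<open>0 \<le> c'\<close> \<open>c' < d'\<close> \<open>coprime c' d'\<close>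
    by (intro exI[of _ d'] exI[of _ c'] exI[of _ q']) auto
qed

lemma small_fraction_form_if_cong:
  fixes k n m d q :: int
  assumes "k < n" "0 \<le> m" "m < n" "1 \<le> d" "1 \<le> q" "d * q \<le> k" "(d * m) mod n = q mod n"
  shows "small_fraction_form k n m"
proof -
  have "q < n" using assms(1,4-6) by (smt (verit) mult_le_cancel_right1)
  from assms(7) have "n dvd d * m - q" by (simp only: mod_eq_dvd_iff)
  then obtain c where c: "d * m - q = n * c" by (auto elim: dvdE)
  have "0 < n" using assms(2,3) by simp
  have "0 \<le> d * m" using assms(2,4) by simp
  with c \<open>q < n\<close> have "n * (-1) < n * c" by linarith
  then have "-1 < c" using \<open>0 < n\<close> by (simp only: mult_less_cancel_left_pos)
  then have "0 \<le> c" by simp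
  have "d * m \<le> d * (n - 1)" using assms(3,4) by simp
  then have "n * c < n * d" using c assms(4,5) by (simp add: algebra_simps)
  then have "c < d" using \<open>0 < n\<close> by (simp add: mult_less_cancel_left_pos)
  from c have "d * m = n * c + q" by simp
  with assms(4-6) \<open>0 \<le> c\<close> \<open>c < d\<close> show ?thesis by (rule small_fraction_form_if_eq)
qed

lemma badly_approximable_below_if_not_small_fraction_form:
  fixes k n m :: int
  assumes "1 \<le> k" "k < n" "0 \<le> m" "m < n" "\<not> small_fraction_form k n m"
  shows "badly_approximable_below (of_int n / (of_int k + 1)) m n"
  unfolding badly_approximable_below_def
proof (intro allI impI)
  fix d q :: int
  assume "1 \<le> d" "1 \<le> q" "q \<le> n" "(d * m) mod n = q mod n"
  with assms have "k + 1 \<le> d * q" using small_fraction_form_if_cong[of k n m d q] by force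
  then have "of_int (k + 1) \<le> (of_int d * of_int q :: real)" by (simp flip: of_int_mult)
  then have "of_int n * of_int (k + 1) \<le> of_int n * (of_int d * (of_int q :: real))"
    using assms(1,2) by (intro mult_left_mono) simp_all
  with assms(1) have "of_int n \<le> of_int n * (of_int d * of_int q) / (of_int k + 1 :: real)"
    by (simp add: pos_le_divide_eq)
  also have "\<dots> = of_int n / (of_int k + 1) * of_int d * of_int q" by simp
  finally show "of_int n \<le> of_int n / (of_int k + 1) * of_int d * (of_int q :: real)" .
qed

lemma large_n_gap:
  fixes k n :: real
  assumes "k \<ge> 1" "n \<ge> (8 * (k * (k + 1)) + 4 + 3 * k)^2"
  shows "1 + n / (k + 1) + 4 * sqrt n < n / k - 3 - 3 * k"
proof -
  define K where "K = k * (k + 1)"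
  have "0 < K" unfolding K_def using assms(1) by simp
  have s: "8 * K + 4 + 3 * k \<le> sqrt n"
    using real_sqrt_le_mono[OF assms(2)] \<open>0 < K\<close> assms(1) unfolding K_def by simp
  have "0 \<le> n" using order_trans[OF zero_le_power2 assms(2)] .
  have "8 * K * sqrt n \<le> sqrt n * sqrt n"
    using s \<open>0 < K\<close> \<open>0 \<le> n\<close> assms(1) by (intro mult_right_mono) auto
  then have "8 * sqrt n \<le> n / K" using \<open>0 < K\<close> \<open>0 \<le> n\<close> by (simp add: field_simps)
  moreover have "n / k - n / (k + 1) = n / K" unfolding K_def using assms(1) by (simp add: field_simps)
  moreover have "16 + 12 * k \<le> 4 * sqrt n" using s \<open>0 < K\<close> by simp
  ultimately show ?thesis using assms(1) by linarith
qed

lemma S_lt_S_if_not_small_fraction_form: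
  fixes k n m :: int
  assumes "1 \<le> k" "k < n" "(8 * (k * (k + 1)) + 4 + 3 * k)^2 \<le> n" "coprime k n"
    and "0 \<le> m" "m < n" "coprime m n" "\<not> small_fraction_form k n m"
  shows "S m n < S k n"
proof -
  let ?B = "of_int n / (of_int k + 1) :: real"
  have "1 \<le> ?B" using assms(1,2) by simp
  have "S m n - of_int m / of_int n \<le> min ?B (of_int n) + 4 * sqrt (of_int n)"
    using badly_approximable_below_if_not_small_fraction_form[OF assms(1,2,5,6,8)]
    by (rule S_minus_ratio_le[OF _ \<open>1 \<le> ?B\<close> assms(5-7)])
  moreover have "of_int m / of_int n \<le> (1::real)" using assms(5,6) by simp
  ultimately have "S m n \<le> 1 + ?B + 4 * sqrt (of_int n)" by linarith
  also have "\<dots> < of_int n / of_int k - 3 - 3 * of_int k"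
  proof (rule large_n_gap)
    have "of_int ((8 * (k * (k + 1)) + 4 + 3 * k)^2) \<le> (of_int n :: real)"
      using assms(3) by (simp only: of_int_le_iff)
    then show "(8 * (of_int k * (of_int k + 1)) + 4 + 3 * of_int k)^2 \<le> (of_int n :: real)" by simp
  qed (use assms(1) in simp)
  also have "\<dots> \<le> S k n" using S_lower_bound[OF assms(1) _ assms(4)] assms(1,2) by simp
  finally show ?thesis .
qed

theorem theorem1:
  fixes k :: int
  assumes "k > 0"
  shows "\<exists>N::int. \<forall>n m::int.
           n > max k N \<longrightarrow> gcd k n = 1 \<longrightarrow> m \<in> {0..n-1} \<longrightarrow> gcd m n = 1 \<longrightarrow>
           S m n \<ge> S k n \<longrightarrow>
           (\<exists>d c q::int. d \<in> {1..k} \<and> c \<in> {0..d-1} \<and> gcd c d = 1 \<and>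
              q \<in> {1..k div d} \<and> of_int m = (of_int (n * c + q) / of_int d :: real))"
proof -
  define N where "N = (8 * (k * (k + 1)) + 4 + 3 * k)^2"
  have "small_fraction_form k n m"
    if "n > max k N" "gcd k n = 1" "m \<in> {0..n-1}" "gcd m n = 1" "S m n \<ge> S k n" for n m
    using S_lt_S_if_not_small_fraction_form[of k n m] that assms unfolding N_def
    by (force simp: coprime_iff_gcd_eq_1)
  then show ?thesis unfolding small_fraction_form_def by blast
qed

end
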